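(* For all subsets $X_i, X_j \subseteq A$: if it is not the case that $X_j$ regulates $X_i$, then $X_i \leadsto X_j$.
   Context: Let $A$ be a finite set of agents. For each $a \in A$ let $S_a$ be a nonempty finite set, and let $S = \prod_{a \in A} S_a$ be the set of states; for $s \in S$ and $X \subseteq A$, $s|_X$ denotes the restriction of $s$ to the components in $X$ (extended elementwise to sets of states). For each $a \in A$ let $\to_a \subseteq S \times S$ be a relation that is either empty or left-total, such that whenever $s \to_a s'$, either $s = s'$ or $s$ and $s'$ differ only in the $a$-component. For $X \subseteq A$ let $\to_X = \bigcup_{a \in X} \to_a$ and $\to_X^*$ its reflexive-transitive closure; for $T \subseteq S$, $(T \to_X) = \{ t' : \exists t \in T,\ t \to_X t'\}$. Orbit operator: $\Omega_X(S') = \{ s' : \exists s \in S',\ s \to_X^* s'\}$. Equilibria operator: $\Psi_X(S') = \{ s \in \Omega_X(S') : \forall s' \in S,\ s \to_X^* s' \implies s' \to_X^* s \}$. $M$-relation: for $X, Y \subseteq A$, $X \leadsto Y$ iff for every $S' \subseteq S$, with $T = \Psi_X(\Psi_{X \cup Y}(S'))$, one has $(T \to_Y) \subseteq T$. Regulation: for $a_k, a_\ell \in A$, $a_k$ regulates $a_\ell$ iff there exist $s, s' \in S$ with $s|_{A \setminus \{a_k\}} = s'|_{A \setminus \{a_k\}}$ and $(\{s\} \to_{a_\ell})|_{\{a_\ell\}} \neq (\{s'\} \to_{a_\ell})|_{\{a_\ell\}}$. For $X, Y \subseteq A$, $X$ regulates $Y$ iff some $a_k \in X$ regulates some $a_\ell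 \in Y$. *)

theory Defs
  imports "HOL-Library.FuncSet"
begin

definition states :: "'a set \<Rightarrow> ('a \<Rightarrow> 's set) \<Rightarrow> ('a \<Rightarrow> 's) set" where
  "states A Sa = PiE A Sa"

definition network :: "'a set \<Rightarrow> ('a \<Rightarrow> 's set) \<Rightarrow> ('a \<Rightarrow> (('a \<Rightarrow> 's) \<times> ('a \<Rightarrow> 's)) set) \<Rightarrow> bool" where
  "network A Sa step \<longleftrightarrow>
     finite A \<and>
     (\<forall>a\<in>A. Sa a \<noteq> {} \<and> finite (Sa a)) \<and>
     (\<forall>a\<in>A. step a \<subseteq> states A Sa \<times> states A Sa) \<and>
     (\<forall>a\<in>A. step a = {} \<or> (\<forall>s\<in>states A Sa. \<exists>s'. (s, s') \<in> step a)) \<and>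
     (\<forall>a\<in>A. \<forall>(s, s')\<in>step a. s = s' \<or> (\<forall>b\<in>A - {a}. s b = s' b))"

definition stepX :: "('a \<Rightarrow> ('s \<times> 's) set) \<Rightarrow> 'a set \<Rightarrow> ('s \<times> 's) set" where
  "stepX step X = (\<Union>a\<in>X. step a)"

definition Omega :: "('a \<Rightarrow> ('s \<times> 's) set) \<Rightarrow> 'a set \<Rightarrow> 's set \<Rightarrow> 's set" where
  "Omega step X S' = {s'. \<exists>s\<in>S'. (s, s') \<in> (stepX step X)\<^sup>*}"

definition Psi :: "'s set \<Rightarrow> ('a \<Rightarrow> ('s \<times> 's) set) \<Rightarrow> 'a set \<Rightarrow> 's set \<Rightarrow> 's set" where
  "Psi S step X S' = {s \<in> Omega step X S'.
      \<forall>s'\<in>S. (s, s') \<in> (stepX step X)\<^sup>* \<longrightarrow> (s', s) \<in> (stepX step X)\<^sup>*}"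

definition leadsto :: "'s set \<Rightarrow> ('a \<Rightarrow> ('s \<times> 's) set) \<Rightarrow> 'a set \<Rightarrow> 'a set \<Rightarrow> bool" where
  "leadsto S step X Y \<longleftrightarrow>
     (\<forall>S'. S' \<subseteq> S \<longrightarrow>
        (let T = Psi S step X (Psi S step (X \<union> Y) S') in stepX step Y `` T \<subseteq> T))"

definition regulates_agent :: "'a set \<Rightarrow> ('a \<Rightarrow> 's set) \<Rightarrow> ('a \<Rightarrow> (('a \<Rightarrow> 's) \<times> ('a \<Rightarrow> 's)) set) \<Rightarrow> 'a \<Rightarrow> 'a \<Rightarrow> bool" where
  "regulates_agent A Sa step ak al \<longleftrightarrow>
     (\<exists>s\<in>states A Sa. \<exists>s'\<in>states A Sa.
        (\<forall>b\<in>A - {ak}. s b = s' b) \<and>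
        (\<lambda>t. t al) ` (step al `` {s}) \<noteq> (\<lambda>t. t al) ` (step al `` {s'}))"

definition regulates :: "'a set \<Rightarrow> ('a \<Rightarrow> 's set) \<Rightarrow> ('a \<Rightarrow> (('a \<Rightarrow> 's) \<times> ('a \<Rightarrow> 's)) set) \<Rightarrow> 'a set \<Rightarrow> 'a set \<Rightarrow> bool" where
  "regulates A Sa step X Y \<longleftrightarrow> (\<exists>ak\<in>X. \<exists>al\<in>Y. regulates_agent A Sa step ak al)"

end

theory Submission
  imports Defs
begin

text \<open>
Let \<open>t \<in> T\<close> and \<open>t \<rightarrow>\<^sub>b t'\<close> with \<open>b \<in> X\<^sub>j\<close>. If \<open>b \<in> X\<^sub>i\<close>, then \<open>t'\<close> is \<open>X\<^sub>i\<close>-reachable from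
\<open>t\<close> and \<open>T\<close> is closed under \<open>X\<^sub>i\<close>-reachability. Otherwise \<open>t'\<close> differs from \<open>t\<close> only in the
\<open>b\<close>-component, and since \<open>b\<close> regulates no agent of \<open>X\<^sub>i\<close>, every \<open>X\<^sub>i\<close>-path can be replayed
with the \<open>b\<close>-component overwritten by an arbitrary value, which never changes along the path.
Hence any \<open>u\<close> reachable from \<open>t'\<close> yields \<open>u(b := t b)\<close> reachable from \<open>t\<close>; as \<open>t\<close> is an
equilibrium we can return to \<open>t\<close>, and replaying that path with \<open>b\<close> reset to \<open>u b = t' b\<close>
leads from \<open>u\<close> back to \<open>t'\<close>. So \<open>t'\<close> is again an equilibrium, and \<open>t' \<in> T\<close> because the
outer set \<open>\<Psi>\<^bsub>X\<^sub>i \<union> X\<^sub>j\<^esub>(S')\<close> is closed under all moves of \<open>X\<^sub>i \<union> X\<^sub>j\<close>.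
\<close>

lemma states_fun_upd:
  "s \<in> states A Sa \<Longrightarrow> b \<in> A \<Longrightarrow> v \<in> Sa b \<Longrightarrow> s(b := v) \<in> states A Sa"
  unfolding states_def by (metis PiE_fun_upd insert_absorb)

lemma stepX_mono: "X \<subseteq> Y \<Longrightarrow> stepX step X \<subseteq> stepX step Y"
  unfolding stepX_def by auto

lemma network_step_states:
  "network A Sa step \<Longrightarrow> a \<in> A \<Longrightarrow> (s, s') \<in> step a \<Longrightarrow> s \<in> states A Sa \<and> s' \<in> states A Sa"
  unfolding network_def by blast

lemma network_step_frame:
  assumes "network A Sa step" "a \<in> A" "(s, s') \<in> step a" "c \<in> A" "c \<noteq> a"
  shows "s' c = s c"
proof -
  have "\<forall>a\<in>A. \<forall>(s, s')\<in>step a. s = s' \<or> (\<forall>b\<in>A - {a}. s b = s' b)"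
    using assms(1) unfolding network_def by (elim conjE)
  then have "s = s' \<or> (\<forall>b\<in>A - {a}. s b = s' b)"
    using assms(2,3) by fast
  with assms(4,5) show ?thesis by auto
qed

lemma network_step_eq_fun_upd:
  assumes net: "network A Sa step" and "a \<in> A" "(s, s') \<in> step a"
  shows "s' = s(a := s' a)"
proof (rule PiE_ext[of _ A Sa])
  have "s \<in> states A Sa" "s' \<in> states A Sa"
    using network_step_states[OF assms] by auto
  moreover have "s' a \<in> Sa a" using \<open>s' \<in> states A Sa\<close> \<open>a \<in> A\<close> by (auto simp: states_def)
  ultimately show "s' \<in> PiE A Sa" "s(a := s' a) \<in> PiE A Sa"
    using states_fun_upd \<open>a \<in> A\<close> unfolding states_def by auto
qed (use network_step_frame[OF assms] in auto)

lemma rtrancl_stepX_frame: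
  assumes "network A Sa step" "X \<subseteq> A" "b \<in> A" "b \<notin> X" "(s, u) \<in> (stepX step X)\<^sup>*"
  shows "u b = s b"
  using assms(5)
proof induction
  case (step u w)
  then obtain a where a: "a \<in> X" "(u, w) \<in> step a" by (auto simp: stepX_def)
  with assms(2-4) have "w b = u b" by (metis network_step_frame[OF assms(1)] subsetD)
  with step.IH show ?case by simp
qed simp

lemma Psi_rtrancl_closed:
  assumes s: "s \<in> Psi S step X S'" and su: "(s, u) \<in> (stepX step X)\<^sup>*"
  shows "u \<in> Psi S step X S'"
proof -
  from s obtain p where p: "p \<in> S'" "(p, s) \<in> (stepX step X)\<^sup>*"
    unfolding Psi_def Omega_def by blast
  from p(2) su have "(p, u) \<in> (stepX step X)\<^sup>*" by (rule rtrancl_trans)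
  with p(1) have "u \<in> Omega step X S'" unfolding Omega_def by blast
  moreover have "(w, u) \<in> (stepX step X)\<^sup>*"
    if "w \<in> S" "(u, w) \<in> (stepX step X)\<^sup>*" for w
  proof -
    have "(s, w) \<in> (stepX step X)\<^sup>*" using su that(2) by (rule rtrancl_trans)
    with s that(1) have "(w, s) \<in> (stepX step X)\<^sup>*" unfolding Psi_def by blast
    then show ?thesis using su by (rule rtrancl_trans)
  qed
  ultimately show ?thesis unfolding Psi_def by blast
qed

lemma Omega_subset_rtrancl_closed:
  assumes "Y \<subseteq> Z" and closed: "\<And>s u. s \<in> P \<Longrightarrow> (s, u) \<in> (stepX step Z)\<^sup>* \<Longrightarrow> u \<in> P"
  shows "Omega step Y P \<subseteq> P"
proof
  fix u assume "u \<in> Omega step Y P"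
  then obtain s where "s \<in> P" "(s, u) \<in> (stepX step Y)\<^sup>*" by (auto simp: Omega_def)
  with rtrancl_mono[OF stepX_mono[OF \<open>Y \<subseteq> Z\<close>]] closed show "u \<in> P" by blast
qed

text \<open>Non-regulation yields some successor of \<open>u(b := v)\<close> with the same \<open>a\<close>-component as
\<open>w\<close>; the frame condition forces it to be \<open>w(b := v)\<close>.\<close>

lemma network_step_fun_upd_unregulated:
  assumes net: "network A Sa step" and a: "a \<in> A" and b: "b \<in> A" "a \<noteq> b"
    and nreg: "\<not> regulates_agent A Sa step b a"
    and uw: "(u, w) \<in> step a" and v: "v \<in> Sa b"
  shows "(u(b := v), w(b := v)) \<in> step a"
proof -
  have us: "u \<in> states A Sa" using network_step_states[OF net a uw] by simp
  moreover have "u(b := v) \<in> states A Sa" using us b(1) v by (rule states_fun_upd)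
  moreover have "\<forall>c\<in>A - {b}. u c = (u(b := v)) c" by simp
  ultimately have "(\<lambda>t. t a) ` (step a `` {u}) = (\<lambda>t. t a) ` (step a `` {u(b := v)})"
    using nreg unfolding regulates_agent_def by blast
  moreover have "w a \<in> (\<lambda>t. t a) ` (step a `` {u})" using uw by blast
  ultimately obtain w' where w': "(u(b := v), w') \<in> step a" "w' a = w a" by auto
  have "w' = (u(b := v))(a := w' a)" using network_step_eq_fun_upd[OF net a w'(1)] .
  also have "\<dots> = w(b := v)"
    using network_step_eq_fun_upd[OF net a uw] w'(2) \<open>a \<noteq> b\<close> by (metis fun_upd_twist)
  finally show ?thesis using w'(1) by simp
qed

lemma rtrancl_stepX_fun_upd_unregulated:
  assumes net: "network A Sa step" and X: "X \<subseteq> A" and b: "b \<in> A" "b \<notin> X"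
    and nreg: "\<forall>a\<in>X. \<not> regulates_agent A Sa step b a"
    and su: "(s, u) \<in> (stepX step X)\<^sup>*" and v: "v \<in> Sa b"
  shows "(s(b := v), u(b := v)) \<in> (stepX step X)\<^sup>*"
  using su
proof induction
  case (step u w)
  then obtain a where a: "a \<in> X" "(u, w) \<in> step a" by (auto simp: stepX_def)
  have "a \<in> A" "a \<noteq> b" using a(1) X b by auto
  with a nreg have "(u(b := v), w(b := v)) \<in> step a"
    using network_step_fun_upd_unregulated[OF net _ b(1) _ _ a(2) v] by blast
  with a(1) have "(u(b := v), w(b := v)) \<in> stepX step X" unfolding stepX_def by blast
  with step.IH show ?case by (rule rtrancl_into_rtrancl)
qed simp

lemma Psi_step_unregulated_closed:
  assumes net: "network A Sa step" and X: "X \<subseteq> A" and b: "b \<in> A" "b \<notin> X"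
    and nreg: "\<forall>a\<in>X. \<not> regulates_agent A Sa step b a"
    and t: "t \<in> Psi (states A Sa) step X P" and tt': "(t, t') \<in> step b"
    and t'_Omega: "t' \<in> Omega step X P"
  shows "t' \<in> Psi (states A Sa) step X P"
proof -
  have ts: "t \<in> states A Sa" using network_step_states[OF net b(1) tt'] by simp
  have t': "t' = t(b := t' b)" using network_step_eq_fun_upd[OF net b(1) tt'] .
  have "(u, t') \<in> (stepX step X)\<^sup>*"
    if us: "u \<in> states A Sa" and t'u: "(t', u) \<in> (stepX step X)\<^sup>*" for u
  proof -
    have tb: "t b \<in> Sa b" and ub: "u b \<in> Sa b"
      using ts us b(1) unfolding states_def by auto
    have "(t'(b := t b), u(b := t b)) \<in> (stepX step X)\<^sup>*"
      using rtrancl_stepX_fun_upd_unregulated[OF net X b nreg t'u tb] .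
    then have "(t, u(b := t b)) \<in> (stepX step X)\<^sup>*"
      by (subst (asm) t') simp
    moreover have "u(b := t b) \<in> states A Sa" using us b(1) tb by (rule states_fun_upd)
    ultimately have "(u(b := t b), t) \<in> (stepX step X)\<^sup>*"
      using t unfolding Psi_def by blast
    then have "((u(b := t b))(b := u b), t(b := u b)) \<in> (stepX step X)\<^sup>*"
      using rtrancl_stepX_fun_upd_unregulated[OF net X b nreg _ ub] by blast
    moreover have "t(b := u b) = t'"
      using rtrancl_stepX_frame[OF net X b t'u] by (subst t') simp
    ultimately show ?thesis by simp
  qed
  with t'_Omega show ?thesis unfolding Psi_def by blast
qed

lemma stepX_Image_Psi_subset:
  assumes net: "network A Sa step" and Xi: "Xi \<subseteq> A" and Xj: "Xj \<subseteq> A"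
    and nreg: "\<forall>b\<in>Xj. \<forall>a\<in>Xi. \<not> regulates_agent A Sa step b a"
    and P_closed: "\<And>s u. s \<in> P \<Longrightarrow> (s, u) \<in> (stepX step (Xi \<union> Xj))\<^sup>* \<Longrightarrow> u \<in> P"
  shows "stepX step Xj `` Psi (states A Sa) step Xi P \<subseteq> Psi (states A Sa) step Xi P"
proof
  fix t' assume "t' \<in> stepX step Xj `` Psi (states A Sa) step Xi P"
  then obtain t b where t: "t \<in> Psi (states A Sa) step Xi P" and b: "b \<in> Xj" "(t, t') \<in> step b"
    unfolding stepX_def by auto
  have "Omega step Xi P \<subseteq> P" by (rule Omega_subset_rtrancl_closed[OF _ P_closed]) auto
  with t have "t \<in> P" unfolding Psi_def by blast
  moreover have "(t, t') \<in> stepX step (Xi \<union> Xj)" using b by (auto simp: stepX_def)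
  ultimately have "t' \<in> P" by (rule P_closed[OF _ r_into_rtrancl])
  show "t' \<in> Psi (states A Sa) step Xi P"
  proof (cases "b \<in> Xi")
    case True
    with b have "(t, t') \<in> (stepX step Xi)\<^sup>*" by (auto simp: stepX_def)
    with t show ?thesis by (rule Psi_rtrancl_closed)
  next
    case False
    from \<open>t' \<in> P\<close> have "t' \<in> Omega step Xi P" unfolding Omega_def by blast
    moreover have "\<forall>a\<in>Xi. \<not> regulates_agent A Sa step b a" using nreg b(1) by blast
    moreover have "b \<in> A" using Xj b(1) by blast
    ultimately show ?thesis
      using Psi_step_unregulated_closed[OF net Xi _ False _ t b(2)] by blast
  qed
qed

theorem lemma1:
  fixes A :: "'a set" and Sa :: "'a \<Rightarrow> 's set"
    and step :: "'a \<Rightarrow> (('a \<Rightarrow> 's) \<times> ('a \<Rightarrow> 's)) set"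
    and Xi Xj :: "'a set"
  assumes "network A Sa step"
    and "Xi \<subseteq> A" and "Xj \<subseteq> A"
    and "\<not> regulates A Sa step Xj Xi"
  shows "leadsto (states A Sa) step Xi Xj"
proof -
  have nreg: "\<forall>b\<in>Xj. \<forall>a\<in>Xi. \<not> regulates_agent A Sa step b a"
    using assms(4) unfolding regulates_def by blast
  show ?thesis
    unfolding leadsto_def Let_def
    by (intro allI impI stepX_Image_Psi_subset[OF assms(1-3) nreg]) (rule Psi_rtrancl_closed)
qed

end
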